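(* Let $\ket{\varphi_0}=\xi_0\ket{00}+\xi_1\ket{01}+\xi_2\ket{10}+\xi_3\ket{11}$ be a 2-qubit state (unit vector in $\mathbb{C}^4$) and let $A=\begin{pmatrix}\xi_0&\xi_1\\\xi_2&\xi_3\end{pmatrix}$. (1) If $\det A=0$, let $(v_1,v_2)\neq(0,0)$ be a vector such that both columns of $A$ are multiples of $(v_1,v_2)$, let $K_1=U(\bar v_1,\bar v_2)$; then $(K_1\otimes I)\ket{\varphi_0}=\eta_0\ket{00}+\eta_1\ket{01}$ for some $\eta_0,\eta_1\in\mathbb{C}$, and with $K_2=U(\bar\eta_0,-\eta_1)^T$ we have $(K_1\otimes K_2)\ket{\varphi_0}=\ket{00}$. (2) If $\det A\neq 0$, let $W_1=R_1(A)^T$. Then $\det$ of the matrix associated to the state $cz\,(I\otimes W_1)\ket{\varphi_0}$ is zero, and if $K_1,K_2$ are the matrices constructed as in part (1) from the state $cz\,(I\otimes W_1)\ket{\varphi_0}$ in place of $\ket{\varphi_0}$, then $(K_1\otimes K_2)\,cz\,(I\otimes W_1)\ket{\varphi_0}=\ket{00}$.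
   Context: For complex $(x,y)\neq(0,0)$, $U(x,y)=\frac{1}{\sqrt{|x|^2+|y|^2}}\begin{pmatrix}x&y\\-\bar y&\bar x\end{pmatrix}$. The matrix associated to a 2-qubit state $t_{00}\ket{00}+t_{01}\ket{01}+t_{10}\ket{10}+t_{11}\ket{11}$ is $\begin{pmatrix}t_{00}&t_{01}\\t_{10}&t_{11}\end{pmatrix}$. $cz=\mathrm{diag}(1,1,1,-1)$ in the basis $\ket{00},\ket{01},\ket{10},\ket{11}$, and $I$ is the $2\times2$ identity. For a nonsingular $A=\begin{pmatrix}a&b\\c&d\end{pmatrix}$, $R_1(A)=U(x,y)$ with $x=d-bk$, $y=\bar c-\bar a\bar k$, where, setting $\beta=a\bar c+b\bar d$, $k=\sqrt{(|c|^2+|d|^2)/(|a|^2+|b|^2)}$ if $\beta=0$ and $k=-\sqrt{(|c|^2+|d|^2)/(|\beta|^2(|a|^2+|b|^2))}\,\bar\beta$ if $\beta\neq0$. $M^T$ denotes the transpose of $M$. *)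

theory Defs
  imports "HOL-Analysis.Analysis"
begin

text \<open>Two-qubit states are vectors indexed by 2 \<times> 2, the index (i,j) standing for |ij>.\<close>

definition mat2 :: "complex \<Rightarrow> complex \<Rightarrow> complex \<Rightarrow> complex \<Rightarrow> complex^2^2" where
  "mat2 a b c d = (\<chi> i j. if i = 0 then (if j = 0 then a else b) else (if j = 0 then c else d))"

definition U :: "complex \<Rightarrow> complex \<Rightarrow> complex^2^2" where
  "U x y = (let s = complex_of_real (1 / sqrt ((cmod x)\<^sup>2 + (cmod y)\<^sup>2))
            in mat2 (s * x) (s * y) (s * (- cnj y)) (s * cnj x))"

definition kron :: "complex^2^2 \<Rightarrow> complex^2^2 \<Rightarrow> complex^(2\<times>2)^(2\<times>2)" where
  "kron A B = (\<chi> p q. A $ fst p $ fst q * B $ snd p $ snd q)"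

definition ket :: "2 \<Rightarrow> 2 \<Rightarrow> complex^(2\<times>2)" where
  "ket i j = axis (i, j) 1"

definition assoc_mat :: "complex^(2\<times>2) \<Rightarrow> complex^2^2" where
  "assoc_mat t = (\<chi> i j. t $ (i, j))"

definition cz :: "complex^(2\<times>2)^(2\<times>2)" where
  "cz = (\<chi> p q. if p = q then (if p = (1, 1) then -1 else 1) else 0)"

definition R1 :: "complex^2^2 \<Rightarrow> complex^2^2" where
  "R1 A = (let a = A $ 0 $ 0; b = A $ 0 $ 1; c = A $ 1 $ 0; d = A $ 1 $ 1;
              \<beta> = a * cnj c + b * cnj d;
              k = (if \<beta> = 0
                   then complex_of_real (sqrt (((cmod c)\<^sup>2 + (cmod d)\<^sup>2) / ((cmod a)\<^sup>2 + (cmod b)\<^sup>2)))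
                   else - complex_of_real (sqrt (((cmod c)\<^sup>2 + (cmod d)\<^sup>2)
                              / ((cmod \<beta>)\<^sup>2 * ((cmod a)\<^sup>2 + (cmod b)\<^sup>2)))) * cnj \<beta>);
              x = d - b * k;
              y = cnj c - cnj a * cnj k
          in U x y)"

definition cols_multiple_of :: "complex^2^2 \<Rightarrow> complex \<Rightarrow> complex \<Rightarrow> bool" where
  "cols_multiple_of A v1 v2 = (\<forall>j. \<exists>c. A $ 0 $ j = c * v1 \<and> A $ 1 $ j = c * v2)"

definition part1_conclusion :: "complex^(2\<times>2) \<Rightarrow> bool" where
  "part1_conclusion \<phi> =
     (\<forall>v1 v2. (v1, v2) \<noteq> (0, 0) \<and> cols_multiple_of (assoc_mat \<phi>) v1 v2 \<longrightarrow>
        (let K1 = U (cnj v1) (cnj v2) in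
          \<exists>\<eta>0 \<eta>1. kron K1 (mat 1) *v \<phi> = \<eta>0 *s ket 0 0 + \<eta>1 *s ket 0 1 \<and>
                   kron K1 (transpose (U (cnj \<eta>0) (- \<eta>1))) *v \<phi> = ket 0 0))"

end

(*
  Writing a two-qubit state as its 2x2 coefficient matrix M, the gate A \<otimes> B acts as
  M \<mapsto> A M B^T, and U(x, y) is a unit scalar multiple of the quaternion matrix
  [[x, y], [-conj y, conj x]], hence unitary.

  (1) If both columns of M are multiples of v, then M = v c^T and U(conj v) maps v to (|v|, 0),
  so K1 M has the single nonzero row |v| c^T =: (eta0, eta1), a unit vector; multiplying this
  row by U(conj eta0, -eta1) gives (1, 0).

  (2) For M = [[a, b], [c, d]] the matrix of (I \<otimes> W1) phi is M R1(M), and cz negates its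
  lower right entry. The determinant of the result is a multiple of
  det M * (|c|^2 + |d|^2 - (|a|^2 + |b|^2) |k|^2 + 2 i Im (beta k)), and R1 chooses k so that
  beta k is real and (|a|^2 + |b|^2) |k|^2 = |c|^2 + |d|^2. All gates are unitary, so the
  resulting state is again a unit vector and (1) applies to it.
*)

theory Submission
  imports Defs
begin

(* In the numeral type 2 the numeral 2 equals 0, so the library's UNIV_2 = {1, 2} is {0, 1}. *)
lemma UNIV_2_eq: "(UNIV :: 2 set) = {0, 1}"
proof -
  have "(2::2) = 0" by simp
  then show ?thesis using UNIV_2 by (simp only:) (simp add: insert_commute)
qed

lemma sum_UNIV_2: "(\<Sum>i\<in>UNIV. f i) = f (0::2) + f 1"
  by (simp add: UNIV_2_eq)

lemma sum_UNIV_2x2: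
  "(\<Sum>p\<in>UNIV. f p) = f ((0::2), (0::2)) + f (0, 1) + f (1, 0) + f (1, 1)"
proof -
  have "(\<Sum>p\<in>UNIV. f p) = (\<Sum>i\<in>UNIV. \<Sum>j\<in>UNIV. f ((i::2), (j::2)))"
    by (simp add: UNIV_Times_UNIV [symmetric] sum.cartesian_product del: UNIV_Times_UNIV)
  then show ?thesis by (simp add: sum_UNIV_2 add.assoc)
qed

lemma forall_2_eq: "(\<forall>i::2. P i) \<longleftrightarrow> P 0 \<and> P 1"
  by (metis UNIV_2_eq UNIV_I insertE singletonD)

lemma mat2_nth [simp]:
  "mat2 a b c d $ 0 $ 0 = a" "mat2 a b c d $ 0 $ 1 = b"
  "mat2 a b c d $ 1 $ 0 = c" "mat2 a b c d $ 1 $ 1 = d"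
  by (simp_all add: mat2_def)

lemma mat2_eq_iff: "mat2 a b c d = mat2 a' b' c' d' \<longleftrightarrow> a = a' \<and> b = b' \<and> c = c' \<and> d = d'"
  by (auto simp: vec_eq_iff forall_2_eq)

lemma mat2_mult:
  "mat2 a b c d ** mat2 a' b' c' d' = mat2 (a*a' + b*c') (a*b' + b*d') (c*a' + d*c') (c*b' + d*d')"
  by (simp add: vec_eq_iff forall_2_eq matrix_matrix_mult_def sum_UNIV_2)

lemma det_mat2: "det (mat2 a b c d) = a*d - b*c"
proof -
  have "(2::2) = 0" by simp
  then have "det (mat2 a b c d) = mat2 a b c d $ 1 $ 1 * mat2 a b c d $ 0 $ 0
      - mat2 a b c d $ 1 $ 0 * mat2 a b c d $ 0 $ 1"
    using det_2 [of "mat2 a b c d"] by (simp only:)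
  then show ?thesis by (simp add: mult.commute)
qed

lemma assoc_mat_eq_mat2:
  "assoc_mat \<phi> = mat2 (\<phi>$(0,0)) (\<phi>$(0,1)) (\<phi>$(1,0)) (\<phi>$(1,1))"
  by (simp add: vec_eq_iff forall_2_eq assoc_mat_def)

lemma assoc_mat_inject: "assoc_mat \<phi> = assoc_mat \<psi> \<longleftrightarrow> \<phi> = \<psi>"
  by (auto simp: assoc_mat_def vec_eq_iff)

lemma assoc_mat_kron_mult_vec:
  "assoc_mat (kron A B *v \<phi>) = A ** assoc_mat \<phi> ** transpose B"
  by (simp add: vec_eq_iff assoc_mat_def kron_def matrix_vector_mult_def matrix_matrix_mult_def
      transpose_def sum_UNIV_2x2 sum_UNIV_2 algebra_simps)

lemma assoc_mat_cz_mult_vec: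
  assumes "assoc_mat \<phi> = mat2 a b c d"
  shows "assoc_mat (cz *v \<phi>) = mat2 a b c (- d)"
  using assms
  by (simp add: vec_eq_iff forall_2_eq assoc_mat_def cz_def matrix_vector_mult_def sum_UNIV_2x2)

lemma assoc_mat_ket_0_0: "assoc_mat (ket 0 0) = mat2 1 0 0 0"
  by (simp add: vec_eq_iff forall_2_eq assoc_mat_def ket_def axis_def)

lemma assoc_mat_first_row_state:
  "assoc_mat (\<eta>0 *s ket 0 0 + \<eta>1 *s ket 0 1) = mat2 \<eta>0 \<eta>1 0 0"
  by (simp add: vec_eq_iff forall_2_eq assoc_mat_def ket_def axis_def)

lemma norm_sq_state:
  "(norm (\<phi> :: complex^(2\<times>2)))\<^sup>2 =
     (cmod (\<phi>$(0,0)))\<^sup>2 + (cmod (\<phi>$(0,1)))\<^sup>2 + (cmod (\<phi>$(1,0)))\<^sup>2 + (cmod (\<phi>$(1,1)))\<^sup>2"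
  by (simp add: norm_vec_def L2_set_def sum_UNIV_2x2 sum_nonneg)

lemma norm_sq_state_mat2:
  assumes "assoc_mat \<phi> = mat2 a b c d"
  shows "(norm \<phi>)\<^sup>2 = (cmod a)\<^sup>2 + (cmod b)\<^sup>2 + (cmod c)\<^sup>2 + (cmod d)\<^sup>2"
  using assms by (simp add: norm_sq_state assoc_mat_eq_mat2 mat2_eq_iff)

lemma norm_cz_mult_vec: "norm (cz *v \<phi>) = norm \<phi>"
  by (rule power2_eq_imp_eq [OF _ norm_ge_zero norm_ge_zero])
    (simp only: norm_sq_state_mat2 [OF assoc_mat_cz_mult_vec [OF assoc_mat_eq_mat2]]
      norm_sq_state [of \<phi>] norm_minus_cancel)

lemma cmod_sq_quaternion_mult:
  "(cmod (p*x - q*cnj y))\<^sup>2 + (cmod (p*y + q*cnj x))\<^sup>2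
     = ((cmod p)\<^sup>2 + (cmod q)\<^sup>2) * ((cmod x)\<^sup>2 + (cmod y)\<^sup>2)"
proof -
  have "complex_of_real ((cmod (p*x - q*cnj y))\<^sup>2 + (cmod (p*y + q*cnj x))\<^sup>2)
     = complex_of_real (((cmod p)\<^sup>2 + (cmod q)\<^sup>2) * ((cmod x)\<^sup>2 + (cmod y)\<^sup>2))"
    unfolding of_real_add of_real_mult complex_norm_square
    by (simp only: complex_cnj_diff complex_cnj_mult complex_cnj_add complex_cnj_cnj) algebra
  then show ?thesis by (simp only: of_real_eq_iff)
qed

lemma U_eq_scaled_mat2:
  assumes "(x, y) \<noteq> (0, 0)"
  obtains s where "U x y = mat2 (s*x) (s*y) (- (s * cnj y)) (s * cnj x)"
    and "(cmod s)\<^sup>2 * ((cmod x)\<^sup>2 + (cmod y)\<^sup>2) = 1"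
proof
  let ?S = "(cmod x)\<^sup>2 + (cmod y)\<^sup>2"
  have "?S > 0" using assms by (auto simp: add_pos_nonneg add_nonneg_pos)
  then show "(cmod (of_real (1 / sqrt ?S)))\<^sup>2 * ?S = 1"
    using assms by (simp add: norm_divide power_divide)
  show "U x y = mat2 (of_real (1 / sqrt ?S) * x) (of_real (1 / sqrt ?S) * y)
      (- (of_real (1 / sqrt ?S) * cnj y)) (of_real (1 / sqrt ?S) * cnj x)"
    by (simp add: U_def)
qed

lemma norm_kron_U_mat1_mult_vec:
  assumes "(x, y) \<noteq> (0, 0)"
  shows "norm (kron (U x y) (mat 1) *v \<phi>) = norm \<phi>"
proof (rule power2_eq_imp_eq [OF _ norm_ge_zero norm_ge_zero])
  obtain s where U: "U x y = mat2 (s*x) (s*y) (- (s * cnj y)) (s * cnj x)"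
    and s: "(cmod s)\<^sup>2 * ((cmod x)\<^sup>2 + (cmod y)\<^sup>2) = 1"
    using U_eq_scaled_mat2 [OF assms] .
  have column: "(cmod (x*p + y*q))\<^sup>2 + (cmod (cnj x*q - cnj y*p))\<^sup>2
      = ((cmod p)\<^sup>2 + (cmod q)\<^sup>2) * ((cmod x)\<^sup>2 + (cmod y)\<^sup>2)" for p q
    using cmod_sq_quaternion_mult [of p x q "- cnj y"] by (simp add: algebra_simps)
  let ?a = "\<phi>$(0,0)" and ?b = "\<phi>$(0,1)" and ?c = "\<phi>$(1,0)" and ?d = "\<phi>$(1,1)"
  have entries: "assoc_mat (kron (U x y) (mat 1) *v \<phi>) = mat2 (s * (x*?a + y*?c)) (s * (x*?b + y*?d))
      (s * (cnj x*?c - cnj y*?a)) (s * (cnj x*?d - cnj y*?b))"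
    unfolding assoc_mat_kron_mult_vec U assoc_mat_eq_mat2 [of \<phi>]
    by (simp add: mat2_mult algebra_simps)
  have "(norm (kron (U x y) (mat 1) *v \<phi>))\<^sup>2 = (cmod s)\<^sup>2 *
      (((cmod (x*?a + y*?c))\<^sup>2 + (cmod (cnj x*?c - cnj y*?a))\<^sup>2)
       + ((cmod (x*?b + y*?d))\<^sup>2 + (cmod (cnj x*?d - cnj y*?b))\<^sup>2))"
    unfolding norm_sq_state_mat2 [OF entries] norm_mult power_mult_distrib
    by (simp add: ring_distribs add_ac)
  also have "\<dots> = ((cmod s)\<^sup>2 * ((cmod x)\<^sup>2 + (cmod y)\<^sup>2)) * (norm \<phi>)\<^sup>2"
    unfolding column norm_sq_state by (simp add: algebra_simps)
  also have "\<dots> = (norm \<phi>)\<^sup>2"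
    using s by simp
  finally show "(norm (kron (U x y) (mat 1) *v \<phi>))\<^sup>2 = (norm \<phi>)\<^sup>2" .
qed

lemma norm_kron_mat1_transpose_U_mult_vec:
  assumes "(x, y) \<noteq> (0, 0)"
  shows "norm (kron (mat 1) (transpose (U x y)) *v \<phi>) = norm \<phi>"
proof (rule power2_eq_imp_eq [OF _ norm_ge_zero norm_ge_zero])
  obtain s where U: "U x y = mat2 (s*x) (s*y) (- (s * cnj y)) (s * cnj x)"
    and s: "(cmod s)\<^sup>2 * ((cmod x)\<^sup>2 + (cmod y)\<^sup>2) = 1"
    using U_eq_scaled_mat2 [OF assms] .
  let ?a = "\<phi>$(0,0)" and ?b = "\<phi>$(0,1)" and ?c = "\<phi>$(1,0)" and ?d = "\<phi>$(1,1)"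
  have entries: "assoc_mat (kron (mat 1) (transpose (U x y)) *v \<phi>) = mat2 (s * (?a*x - ?b*cnj y))
      (s * (?a*y + ?b*cnj x)) (s * (?c*x - ?d*cnj y)) (s * (?c*y + ?d*cnj x))"
    unfolding assoc_mat_kron_mult_vec U assoc_mat_eq_mat2 [of \<phi>]
    by (simp add: mat2_mult algebra_simps)
  have "(norm (kron (mat 1) (transpose (U x y)) *v \<phi>))\<^sup>2 = (cmod s)\<^sup>2 *
      (((cmod (?a*x - ?b*cnj y))\<^sup>2 + (cmod (?a*y + ?b*cnj x))\<^sup>2)
       + ((cmod (?c*x - ?d*cnj y))\<^sup>2 + (cmod (?c*y + ?d*cnj x))\<^sup>2))"
    unfolding norm_sq_state_mat2 [OF entries] norm_mult power_mult_distrib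
    by (simp add: ring_distribs add_ac)
  also have "\<dots> = ((cmod s)\<^sup>2 * ((cmod x)\<^sup>2 + (cmod y)\<^sup>2)) * (norm \<phi>)\<^sup>2"
    unfolding cmod_sq_quaternion_mult norm_sq_state by (simp add: algebra_simps)
  also have "\<dots> = (norm \<phi>)\<^sup>2"
    using s by simp
  finally show "(norm (kron (mat 1) (transpose (U x y)) *v \<phi>))\<^sup>2 = (norm \<phi>)\<^sup>2" .
qed

lemma cols_multiple_of_mat2:
  assumes "cols_multiple_of A v1 v2"
  obtains c0 c1 where "A = mat2 (c0 * v1) (c1 * v1) (c0 * v2) (c1 * v2)"
proof -
  obtain c0 where "A$0$0 = c0 * v1" "A$1$0 = c0 * v2"
    using assms unfolding cols_multiple_of_def by blast
  moreover obtain c1 where "A$0$1 = c1 * v1" "A$1$1 = c1 * v2"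
    using assms unfolding cols_multiple_of_def by blast
  ultimately show ?thesis
    by (intro that [of c0 c1]) (simp add: vec_eq_iff forall_2_eq mat2_def)
qed

lemma U_cnj_mult_rank_one:
  assumes "(v1, v2) \<noteq> (0, 0)"
  defines "n \<equiv> complex_of_real (sqrt ((cmod v1)\<^sup>2 + (cmod v2)\<^sup>2))"
  shows "U (cnj v1) (cnj v2) ** mat2 (c0 * v1) (c1 * v1) (c0 * v2) (c1 * v2) = mat2 (n*c0) (n*c1) 0 0"
proof -
  define N where "N = (cmod v1)\<^sup>2 + (cmod v2)\<^sup>2"
  define s where "s = complex_of_real (1 / sqrt N)"
  have "N > 0" using assms by (auto simp: N_def add_pos_nonneg add_nonneg_pos)
  then have "1 / sqrt N * N = sqrt N"
    by (simp add: real_div_sqrt)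
  then have "s * complex_of_real N = n"
    unfolding s_def n_def N_def [symmetric] by (metis of_real_mult)
  moreover have "cnj v1 * v1 + cnj v2 * v2 = complex_of_real N"
    unfolding N_def of_real_add complex_norm_square by (simp add: mult.commute)
  ultimately have norm_v: "s * (cnj v1 * v1 + cnj v2 * v2) = n" by simp
  have "s * cnj v1 * (c * v1) + s * cnj v2 * (c * v2) = n * c" for c
  proof -
    have "s * cnj v1 * (c * v1) + s * cnj v2 * (c * v2) = s * (cnj v1 * v1 + cnj v2 * v2) * c"
      by (simp add: algebra_simps)
    then show ?thesis unfolding norm_v .
  qed
  moreover have "U (cnj v1) (cnj v2) = mat2 (s * cnj v1) (s * cnj v2) (- (s * v2)) (s * v1)"
    by (simp add: U_def s_def N_def)
  ultimately show ?thesis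
    by (simp add: mat2_mult algebra_simps)
qed

lemma first_row_mult_U_cnj_neg:
  assumes "(cmod \<eta>0)\<^sup>2 + (cmod \<eta>1)\<^sup>2 = 1"
  shows "mat2 \<eta>0 \<eta>1 0 0 ** U (cnj \<eta>0) (- \<eta>1) = mat2 1 0 0 0"
proof -
  have "\<eta>0 * cnj \<eta>0 + \<eta>1 * cnj \<eta>1 = complex_of_real ((cmod \<eta>0)\<^sup>2 + (cmod \<eta>1)\<^sup>2)"
    by (simp only: complex_norm_square of_real_add)
  then have "\<eta>0 * cnj \<eta>0 + \<eta>1 * cnj \<eta>1 = 1"
    using assms by simp
  then show ?thesis using assms by (simp add: U_def mat2_mult mat2_eq_iff mult.commute)
qed

(* No determinant hypothesis is needed: admissible (v1, v2) exist only when det = 0. *)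
lemma part1_conclusion_if_norm_eq_1:
  assumes "norm \<phi> = 1"
  shows "part1_conclusion \<phi>"
  unfolding part1_conclusion_def Let_def
proof (intro allI impI, elim conjE)
  fix v1 v2
  assume v: "(v1, v2) \<noteq> (0, 0)" and "cols_multiple_of (assoc_mat \<phi>) v1 v2"
  from this(2) obtain c0 c1 where M: "assoc_mat \<phi> = mat2 (c0 * v1) (c1 * v1) (c0 * v2) (c1 * v2)"
    by (rule cols_multiple_of_mat2)
  define K1 where "K1 = U (cnj v1) (cnj v2)"
  define n where "n = complex_of_real (sqrt ((cmod v1)\<^sup>2 + (cmod v2)\<^sup>2))"
  have K1M: "K1 ** assoc_mat \<phi> = mat2 (n * c0) (n * c1) 0 0"
    unfolding K1_def n_def M using U_cnj_mult_rank_one [OF v] .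
  have K1_applied: "kron K1 (mat 1) *v \<phi> = (n * c0) *s ket 0 0 + (n * c1) *s ket 0 1"
    by (simp flip: assoc_mat_inject add: assoc_mat_kron_mult_vec assoc_mat_first_row_state K1M)
  have "(cnj v1, cnj v2) \<noteq> (0, 0)" using v by simp
  then have "norm (kron K1 (mat 1) *v \<phi>) = 1"
    unfolding K1_def using norm_kron_U_mat1_mult_vec assms by simp
  then have "(cmod (n * c0))\<^sup>2 + (cmod (n * c1))\<^sup>2 = 1"
    using norm_sq_state_mat2 [OF assoc_mat_first_row_state, of "n * c0" "n * c1"]
    unfolding K1_applied by simp
  then have "K1 ** assoc_mat \<phi> ** U (cnj (n * c0)) (- (n * c1)) = mat2 1 0 0 0"
    unfolding K1M by (rule first_row_mult_U_cnj_neg)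
  then have K1_K2_applied: "kron K1 (transpose (U (cnj (n * c0)) (- (n * c1)))) *v \<phi> = ket 0 0"
    by (simp flip: assoc_mat_inject add: assoc_mat_kron_mult_vec assoc_mat_ket_0_0)
  show "\<exists>\<eta>0 \<eta>1. kron (U (cnj v1) (cnj v2)) (mat 1) *v \<phi> = \<eta>0 *s ket 0 0 + \<eta>1 *s ket 0 1 \<and>
      kron (U (cnj v1) (cnj v2)) (transpose (U (cnj \<eta>0) (- \<eta>1))) *v \<phi> = ket 0 0"
    using K1_applied K1_K2_applied unfolding K1_def by blast
qed

lemma R1_coefficient_balances:
  fixes \<beta> :: complex and Na Nc :: real
  assumes "Na > 0" and "Nc \<ge> 0"
  defines "k \<equiv> if \<beta> = 0 then complex_of_real (sqrt (Nc / Na))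
              else - complex_of_real (sqrt (Nc / ((cmod \<beta>)\<^sup>2 * Na))) * cnj \<beta>"
  shows "\<beta> * k \<in> \<real>" and "Na * (cmod k)\<^sup>2 = Nc"
proof -
  have "\<beta> * (complex_of_real t * cnj \<beta>) = complex_of_real (t * (cmod \<beta>)\<^sup>2)" for t
    by (simp only: of_real_mult complex_norm_square ac_simps)
  then have "\<beta> * (complex_of_real t * cnj \<beta>) \<in> \<real>" for t
    by (simp only: Reals_of_real)
  from this [of "- sqrt (Nc / ((cmod \<beta>)\<^sup>2 * Na))"] show "\<beta> * k \<in> \<real>"
    by (simp add: k_def)
  show "Na * (cmod k)\<^sup>2 = Nc"
    using assms by (simp add: k_def norm_mult power_mult_distrib)
qed

lemma R1_eq_U:
  assumes "a * d - b * c \<noteq> 0"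
  obtains k where "R1 (mat2 a b c d) = U (d - b * k) (cnj c - cnj a * cnj k)"
    and "(d - b * k, cnj c - cnj a * cnj k) \<noteq> (0, 0)"
    and "(a * cnj c + b * cnj d) * k \<in> \<real>"
    and "((cmod a)\<^sup>2 + (cmod b)\<^sup>2) * (cmod k)\<^sup>2 = (cmod c)\<^sup>2 + (cmod d)\<^sup>2"
proof -
  define \<beta> where "\<beta> = a * cnj c + b * cnj d"
  define Na where "Na = (cmod a)\<^sup>2 + (cmod b)\<^sup>2"
  define Nc where "Nc = (cmod c)\<^sup>2 + (cmod d)\<^sup>2"
  define k where "k = (if \<beta> = 0 then complex_of_real (sqrt (Nc / Na))
              else - complex_of_real (sqrt (Nc / ((cmod \<beta>)\<^sup>2 * Na))) * cnj \<beta>)"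
  have "(a, b) \<noteq> (0, 0)" using assms by auto
  then have "Na > 0" by (auto simp: Na_def add_pos_nonneg add_nonneg_pos)
  moreover have "Nc \<ge> 0" by (simp add: Nc_def)
  ultimately have "\<beta> * k \<in> \<real>" "Na * (cmod k)\<^sup>2 = Nc"
    unfolding k_def by (rule R1_coefficient_balances)+
  moreover have "R1 (mat2 a b c d) = U (d - b * k) (cnj c - cnj a * cnj k)"
    by (simp add: R1_def Let_def k_def \<beta>_def Na_def Nc_def)
  moreover have "(d - b * k, cnj c - cnj a * cnj k) \<noteq> (0, 0)"
  proof
    assume "(d - b * k, cnj c - cnj a * cnj k) = (0, 0)"
    then have "d = b * k" "c = a * k"
      by (simp_all add: complex_cnj_cancel_iff flip: complex_cnj_mult)
    with assms show False by simp
  qed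
  ultimately show ?thesis using that unfolding \<beta>_def Na_def Nc_def by blast
qed

(* Up to a factor -s^2 with s the scale of U(x, y), the left-hand side is the determinant of
   the coefficient matrix of cz (I \<otimes> U(x, y)^T) phi, where phi has coefficient matrix
   [[a, b], [c, d]]. *)
lemma cz_twisted_det_eq_0:
  fixes a b c d k :: complex
  assumes real: "(a * cnj c + b * cnj d) * k \<in> \<real>"
    and balance: "((cmod a)\<^sup>2 + (cmod b)\<^sup>2) * (cmod k)\<^sup>2 = (cmod c)\<^sup>2 + (cmod d)\<^sup>2"
  defines "x \<equiv> d - b * k" and "y \<equiv> cnj c - cnj a * cnj k"
  shows "(a*x - b*cnj y) * (c*y + d*cnj x) + (a*y + b*cnj x) * (c*x - d*cnj y) = 0"
proof -
  have "(a*x - b*cnj y) * (c*y + d*cnj x) + (a*y + b*cnj x) * (c*x - d*cnj y)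
      = (a*d - b*c) * ((c*cnj c + d*cnj d) - (a*cnj a + b*cnj b) * (k*cnj k)
          + ((a * cnj c + b * cnj d) * k - cnj ((a * cnj c + b * cnj d) * k)))"
    unfolding x_def y_def by simp algebra
  moreover have "cnj ((a * cnj c + b * cnj d) * k) = (a * cnj c + b * cnj d) * k"
    using real by (simp only: Reals_cnj_iff)
  moreover have "(a*cnj a + b*cnj b) * (k*cnj k) = c*cnj c + d*cnj d"
    using arg_cong [OF balance, of complex_of_real]
    by (simp only: of_real_mult of_real_add complex_norm_square)
  ultimately show ?thesis by simp
qed

lemma R1_disentangles:
  assumes "det (assoc_mat \<phi>) \<noteq> 0"
  defines "\<psi> \<equiv> cz *v (kron (mat 1) (transpose (R1 (assoc_mat \<phi>))) *v \<phi>)"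
  shows "det (assoc_mat \<psi>) = 0" and "norm \<psi> = norm \<phi>"
proof -
  let ?a = "\<phi>$(0,0)" and ?b = "\<phi>$(0,1)" and ?c = "\<phi>$(1,0)" and ?d = "\<phi>$(1,1)"
  have A: "assoc_mat \<phi> = mat2 ?a ?b ?c ?d" by (rule assoc_mat_eq_mat2)
  then have "?a * ?d - ?b * ?c \<noteq> 0" using assms by (simp add: det_mat2)
  then obtain k where R1: "R1 (assoc_mat \<phi>) = U (?d - ?b * k) (cnj ?c - cnj ?a * cnj k)"
    and xy: "(?d - ?b * k, cnj ?c - cnj ?a * cnj k) \<noteq> (0, 0)"
    and real: "(?a * cnj ?c + ?b * cnj ?d) * k \<in> \<real>"
    and balance: "((cmod ?a)\<^sup>2 + (cmod ?b)\<^sup>2) * (cmod k)\<^sup>2 = (cmod ?c)\<^sup>2 + (cmod ?d)\<^sup>2"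
    unfolding A by (rule R1_eq_U)
  show "norm \<psi> = norm \<phi>"
    using xy by (simp add: \<psi>_def R1 norm_cz_mult_vec norm_kron_mat1_transpose_U_mult_vec)
  define x where "x = ?d - ?b * k"
  define y where "y = cnj ?c - cnj ?a * cnj k"
  obtain s where U: "U x y = mat2 (s*x) (s*y) (- (s * cnj y)) (s * cnj x)"
    using U_eq_scaled_mat2 xy unfolding x_def y_def by blast
  have "assoc_mat (kron (mat 1) (transpose (R1 (assoc_mat \<phi>))) *v \<phi>) =
      mat2 (s * (?a*x - ?b*cnj y)) (s * (?a*y + ?b*cnj x))
        (s * (?c*x - ?d*cnj y)) (s * (?c*y + ?d*cnj x))"
    unfolding assoc_mat_kron_mult_vec transpose_transpose R1 x_def [symmetric] y_def [symmetric] U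
    unfolding A by (simp add: mat2_mult algebra_simps)
  then have "assoc_mat \<psi> = mat2 (s * (?a*x - ?b*cnj y)) (s * (?a*y + ?b*cnj x))
      (s * (?c*x - ?d*cnj y)) (- (s * (?c*y + ?d*cnj x)))"
    unfolding \<psi>_def by (rule assoc_mat_cz_mult_vec)
  then have "det (assoc_mat \<psi>) =
      - (s * s) * ((?a*x - ?b*cnj y) * (?c*y + ?d*cnj x) + (?a*y + ?b*cnj x) * (?c*x - ?d*cnj y))"
    by (simp add: det_mat2 algebra_simps)
  also have "\<dots> = 0"
    using cz_twisted_det_eq_0 [OF real balance] by (simp add: x_def y_def)
  finally show "det (assoc_mat \<psi>) = 0" .
qed

theorem mainTheorem4:
  fixes \<phi> :: "complex^(2\<times>2)"
  assumes "norm \<phi> = 1"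
  shows "(det (assoc_mat \<phi>) = 0 \<longrightarrow> part1_conclusion \<phi>) \<and>
         (det (assoc_mat \<phi>) \<noteq> 0 \<longrightarrow>
            (let W1 = transpose (R1 (assoc_mat \<phi>));
                 \<psi> = cz *v (kron (mat 1) W1 *v \<phi>)
             in det (assoc_mat \<psi>) = 0 \<and> part1_conclusion \<psi>))"
  using assms R1_disentangles by (simp add: Let_def part1_conclusion_if_norm_eq_1)

end
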